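(* Let $n\ge 3$, let $\pi\in S_{n-2}$, and let $\tau\in S_n$ be the permutation $\tau=n\,(\pi_1+1)(\pi_2+1)\cdots(\pi_{n-2}+1)\,1$ (in one-line notation). Then $\pi$ is shallow if and only if $\tau$ is shallow.
   Context: For $\pi\in S_n$: $D(\pi)=\sum_{i}|\pi_i-i|$, $I(\pi)$ is the number of inversions, $T(\pi)=n-\mathrm{cyc}(\pi)$ with $\mathrm{cyc}$ the number of cycles in the disjoint cycle decomposition; $\pi$ is shallow if $I(\pi)+T(\pi)=D(\pi)$. *)

theory Defs
  imports "HOL-Combinatorics.Permutations" "HOL-Combinatorics.Orbits"
begin

text \<open>A permutation in S_n is a function p on nat with p permutes {1..n}.\<close>

definition depth :: "nat \<Rightarrow> (nat \<Rightarrow> nat) \<Rightarrow> int" where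
  "depth n p = (\<Sum>i\<in>{1..n}. \<bar>int (p i) - int i\<bar>)"

definition inversions :: "nat \<Rightarrow> (nat \<Rightarrow> nat) \<Rightarrow> nat" where
  "inversions n p = card {(i, j). i \<in> {1..n} \<and> j \<in> {1..n} \<and> i < j \<and> p i > p j}"

definition num_cycles :: "nat \<Rightarrow> (nat \<Rightarrow> nat) \<Rightarrow> nat" where
  "num_cycles n p = card ((\<lambda>x. orbit p x) ` {1..n})"

definition reflection_length :: "nat \<Rightarrow> (nat \<Rightarrow> nat) \<Rightarrow> nat" where
  "reflection_length n p = n - num_cycles n p"

definition shallow :: "nat \<Rightarrow> (nat \<Rightarrow> nat) \<Rightarrow> bool" where
  "shallow n p \<longleftrightarrow> int (inversions n p) + int (reflection_length n p) = depth n p"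

definition tau_ext :: "nat \<Rightarrow> (nat \<Rightarrow> nat) \<Rightarrow> nat \<Rightarrow> nat" where
  "tau_ext n p i = (if i = 1 then n else if i = n then 1
                    else if 2 \<le> i \<and> i \<le> n - 1 then p (i - 1) + 1 else i)"

end

theory Submission
  imports Defs
begin

text \<open>Away from its end points, \<open>\<tau>\<close> is \<open>\<pi>\<close> shifted by one, and it swaps the end points \<open>1\<close>
  and \<open>n\<close>. The value \<open>n\<close> in front and the value \<open>1\<close> at the back create \<open>(n - 1) + (n - 2)\<close>
  new inversions; the shifted cycles of \<open>\<pi>\<close> together with the transposition \<open>(1 n)\<close> are the
  cycles of \<open>\<tau>\<close>, so \<open>T\<close> grows by one; and the two end points add \<open>2(n - 1)\<close> to the
  depth. So \<open>I + T\<close> and \<open>D\<close> both grow by \<open>2(n - 1)\<close>.\<close>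

text \<open>Stated with \<open>Suc 0\<close>, the simp normal form of \<open>1 :: nat\<close>.\<close>
lemma tau_ext_first [simp]: "tau_ext n p (Suc 0) = n"
  by (simp add: tau_ext_def)

lemma tau_ext_last [simp]: "tau_ext n p n = 1"
  by (simp add: tau_ext_def)

lemma tau_ext_Suc [simp]: "i \<in> {1..n - 2} \<Longrightarrow> tau_ext n p (Suc i) = Suc (p i)"
  by (auto simp: tau_ext_def)

lemma atLeastAtMost_split_ends:
  "2 \<le> n \<Longrightarrow> {1..n} = insert 1 (insert n (Suc ` {1..n - 2}))"
  by (auto simp: image_iff intro: bexI[of _ "_ - 1"])

lemma depth_tau_ext:
  assumes "2 \<le> n"
  shows "depth n (tau_ext n p) = depth (n - 2) p + 2 * (int n - 1)"
proof -
  let ?t = "tau_ext n p"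
  have "depth n ?t = 2 * (int n - 1) + (\<Sum>i\<in>Suc ` {1..n - 2}. \<bar>int (?t i) - int i\<bar>)"
    unfolding depth_def atLeastAtMost_split_ends[OF assms] using assms by simp
  also have "(\<Sum>i\<in>Suc ` {1..n - 2}. \<bar>int (?t i) - int i\<bar>) = depth (n - 2) p"
    by (subst sum.reindex) (simp_all add: depth_def)
  finally show ?thesis by simp
qed

lemma orbit_subset_invariant:
  assumes "x \<in> A" "f ` A \<subseteq> A"
  shows "orbit f x \<subseteq> A"
proof
  fix y assume "y \<in> orbit f x"
  then show "y \<in> A" by induct (use assms in auto)
qed

lemma orbit_transposition:
  assumes "f a = b" "f b = a"
  shows "orbit f a = {a, b}"
proof
  show "orbit f a \<subseteq> {a, b}"
  proof
    fix y assume "y \<in> orbit f a"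
    then show "y \<in> {a, b}" by induct (use assms in auto)
  qed
  have "b \<in> orbit f a"
    using orbit.base[of f a] assms(1) by simp
  moreover from this have "a \<in> orbit f a"
    using orbit.step[of b f a] assms(2) by simp
  ultimately show "{a, b} \<subseteq> orbit f a"
    by simp
qed

lemma orbit_semiconj:
  assumes "x \<in> A" "f ` A \<subseteq> A" "\<And>y. y \<in> A \<Longrightarrow> g (h y) = h (f y)"
  shows "orbit g (h x) = h ` orbit f x"
proof -
  have "(g ^^ k) (h x) = h ((f ^^ k) x) \<and> (f ^^ k) x \<in> A" for k
    by (induction k) (use assms in auto)
  then have "{(g ^^ k) (h x) | k. 0 < k} = h ` {(f ^^ k) x | k. 0 < k}"
    by auto
  then show ?thesis
    by (simp add: orbit_altdef)
qed

lemma num_cycles_le: "num_cycles n p \<le> n"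
  unfolding num_cycles_def using card_image_le[of "{1..n}" "orbit p"] by simp

lemma num_cycles_tau_ext:
  assumes n: "2 \<le> n" and p: "p ` {1..n - 2} \<subseteq> {1..n - 2}"
  shows "num_cycles n (tau_ext n p) = num_cycles (n - 2) p + 1"
proof -
  let ?t = "tau_ext n p" and ?O = "orbit p ` {1..n - 2}"
  have shift: "orbit ?t (Suc x) = Suc ` orbit p x" if "x \<in> {1..n - 2}" for x
    using that p by (intro orbit_semiconj) auto
  have swap: "orbit ?t 1 = {1, n}" "orbit ?t n = {1, n}"
    using orbit_transposition[of ?t 1 n] orbit_transposition[of ?t n 1] by (simp_all add: insert_commute)
  have "orbit ?t ` Suc ` {1..n - 2} = image Suc ` ?O"
    unfolding image_image by (rule image_cong[OF refl shift])
  then have "orbit ?t ` {1..n} = insert {1, n} (image Suc ` ?O)"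
    unfolding atLeastAtMost_split_ends[OF n] image_insert swap by (simp only: insert_absorb2)
  moreover have "{1, n} \<notin> image Suc ` ?O"
  proof
    assume "{1, n} \<in> image Suc ` ?O"
    then obtain x where x: "x \<in> {1..n - 2}" and "1 \<in> Suc ` orbit p x"
      by (metis (no_types, lifting) image_iff insertI1)
    then have "0 \<in> orbit p x"
      by auto
    with orbit_subset_invariant[OF x p] show False
      by auto
  qed
  moreover have "inj_on (image Suc) ?O"
    by (simp add: inj_on_image)
  ultimately show ?thesis
    unfolding num_cycles_def by (simp add: card_insert_disjoint card_image)
qed

definition inversion_set :: "nat \<Rightarrow> (nat \<Rightarrow> nat) \<Rightarrow> (nat \<times> nat) set" where
  "inversion_set n p = {(i, j). i \<in> {1..n} \<and> j \<in> {1..n} \<and> i < j \<and> p i > p j}"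

lemma inversions_eq_card: "inversions n p = card (inversion_set n p)"
  by (simp add: inversions_def inversion_set_def)

lemma finite_inversion_set: "finite (inversion_set n p)"
  by (rule finite_subset[of _ "{1..n} \<times> {1..n}"]) (auto simp: inversion_set_def)

lemma map_prod_Suc_image_iff:
  "(i, j) \<in> map_prod Suc Suc ` S \<longleftrightarrow> 0 < i \<and> 0 < j \<and> (i - 1, j - 1) \<in> S"
proof
  assume "0 < i \<and> 0 < j \<and> (i - 1, j - 1) \<in> S"
  then show "(i, j) \<in> map_prod Suc Suc ` S"
    by (intro image_eqI[of _ _ "(i - 1, j - 1)"]) simp_all
qed auto

lemma inversion_set_tau_ext:
  assumes n: "2 \<le> n" and p: "p ` {1..n - 2} \<subseteq> {1..n - 2}"
  shows "inversion_set n (tau_ext n p)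
    = Pair 1 ` {2..n} \<union> (\<lambda>i. (i, n)) ` {2..n - 1} \<union> map_prod Suc Suc ` inversion_set (n - 2) p"
    (is "?lhs = ?first \<union> ?last \<union> ?inner")
proof -
  let ?t = "tau_ext n p"
  have inner_values: "?t k = Suc (p (k - 1)) \<and> p (k - 1) \<in> {1..n - 2}" if "k \<in> {2..n - 1}" for k
  proof -
    have k: "k - 1 \<in> {1..n - 2}" and "k = Suc (k - 1)"
      using that by auto
    then show ?thesis
      using p k tau_ext_Suc[OF k, of p] by (metis image_subset_iff)
  qed
  have below_first: "?t k < ?t 1" if "k \<in> {2..n}" for k
  proof (cases "k = n")
    case False
    with that have "k \<in> {2..n - 1}"
      by auto
    with inner_values[of k] show ?thesis
      by auto
  qed (use n in simp)
  have above_last: "?t n < ?t k" if "k \<in> {2..n - 1}" for k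
    using that inner_values[of k] by auto
  have inner_iff: "(i, j) \<in> ?inner \<longleftrightarrow>
      i \<in> {2..n - 1} \<and> j \<in> {2..n - 1} \<and> i < j \<and> p (i - 1) > p (j - 1)" for i j
    unfolding map_prod_Suc_image_iff inversion_set_def by auto
  have "(i, j) \<in> ?lhs \<longleftrightarrow> (i, j) \<in> ?first \<union> ?last \<union> ?inner" for i j
  proof (cases "i = 1")
    case True
    show ?thesis
      unfolding True using below_first inner_iff[of 1 j] by (auto simp: inversion_set_def)
  next
    case i: False
    show ?thesis
    proof (cases "j = n")
      case True
      then show ?thesis
        using i above_last inner_iff[of i j] by (auto simp: inversion_set_def)
    next
      case j: False
      have "(i, j) \<in> ?lhs \<longleftrightarrow> i \<in> {2..n - 1} \<and> j \<in> {2..n - 1} \<and> i < j \<and> ?t i > ?t j"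
        using i j by (auto simp: inversion_set_def)
      then show ?thesis
        using i j inner_values[of i] inner_values[of j] inner_iff[of i j] by auto
    qed
  qed
  then show ?thesis
    by (metis set_eqI surj_pair)
qed

lemma inversions_tau_ext:
  assumes n: "2 \<le> n" and p: "p ` {1..n - 2} \<subseteq> {1..n - 2}"
  shows "inversions n (tau_ext n p) = inversions (n - 2) p + (2 * n - 3)"
proof -
  let ?first = "Pair (1::nat) ` {2..n}" and ?last = "(\<lambda>i. (i, n)) ` {2..n - 1}"
    and ?inner = "map_prod Suc Suc ` inversion_set (n - 2) p"
  have disjoint: "?first \<inter> (?last \<union> ?inner) = {}" "?last \<inter> ?inner = {}"
    by (auto simp: map_prod_Suc_image_iff inversion_set_def)
  have "inversions n (tau_ext n p) = card (?first \<union> (?last \<union> ?inner))"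
    by (simp add: inversions_eq_card inversion_set_tau_ext[OF n p] Un_assoc)
  also have "\<dots> = card ?first + (card ?last + card ?inner)"
    using disjoint by (simp add: card_Un_disjoint finite_inversion_set)
  also have "card ?first = n - 1"
    by (simp add: card_image inj_on_def)
  also have "card ?last = n - 2"
    by (simp add: card_image inj_on_def)
  also have "card ?inner = inversions (n - 2) p"
    unfolding inversions_eq_card by (rule card_image) (auto simp: inj_on_def)
  finally show ?thesis
    using n by simp
qed

theorem lemma2p5:
  fixes n :: nat and p :: "nat \<Rightarrow> nat"
  assumes "n \<ge> 3" and "p permutes {1..n-2}"
  shows "shallow (n - 2) p \<longleftrightarrow> shallow n (tau_ext n p)"
proof -
  have n: "2 \<le> n"
    using assms(1) by simp
  have p: "p ` {1..n - 2} \<subseteq> {1..n - 2}"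
    using permutes_image[OF assms(2)] by simp
  have "num_cycles (n - 2) p \<le> n - 2"
    by (rule num_cycles_le)
  then show ?thesis
    unfolding shallow_def reflection_length_def depth_tau_ext[OF n]
      inversions_tau_ext[OF n p] num_cycles_tau_ext[OF n p]
    using assms(1) by auto
qed

end
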